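(* Let $n\ge1$ and $P=\Phi^+(B_n)=\{(i,j)\colon 1\le i\le j\le 2n-1,\ i+j\ge 2n\}$. Then for $k=2,4,\dots,2n-2$ we have \[2\sum_{\substack{(i,j)\in P\\ j-i=k}}\mathbb{1}_{(i,j)}-\sum_{\substack{(i,j)\in P\\ j-i=k-1}}\mathbb{1}_{(i,j)}-\sum_{\substack{(i,j)\in P\\ j-i=k+1}}\mathbb{1}_{(i,j)}\equiv 1,\] and furthermore \[2\sum_{(i,i)\in P}\mathbb{1}_{(i,i)}-2\sum_{(i,i+1)\in P}\mathbb{1}_{(i,i+1)}\equiv 1.\]
   Context: $P$ is ordered by $(i,j)\le(i',j')$ iff $i\le i'$ and $j\le j'$. $\mathcal{J}(P)$ is the set of order ideals of $P$. For $x\in P$, $I\in\mathcal{J}(P)$: $\mathbb{1}_x(I)=1$ if $x\in I$, else $0$; $T_x^+(I)=1$ if $x$ is a minimal element of $P\setminus I$, else $0$; $T_x^-(I)=1$ if $x$ is a maximal element of $I$, else $0$; $T_x=T_x^+-T_x^-$. For $f,g\colon\mathcal{J}(P)\to\mathbb{R}$, $f\equiv g$ means $f-g=\sum_{x\in P}c_xT_x$ for some real constants $c_x$; a real number denotes the corresponding constant function. *)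

theory Defs
  imports Complex_Main
begin

type_synonym pos = "nat \<times> nat"

definition ple :: "pos \<Rightarrow> pos \<Rightarrow> bool" where
  "ple x y \<longleftrightarrow> fst x \<le> fst y \<and> snd x \<le> snd y"

definition PhiB :: "nat \<Rightarrow> pos set" where
  "PhiB n = {(i,j). 1 \<le> i \<and> i \<le> j \<and> j \<le> 2*n - 1 \<and> i + j \<ge> 2*n}"

definition order_ideals :: "pos set \<Rightarrow> pos set set" where
  "order_ideals P = {I. I \<subseteq> P \<and> (\<forall>x\<in>I. \<forall>y\<in>P. ple y x \<longrightarrow> y \<in> I)}"

definition ind :: "pos \<Rightarrow> pos set \<Rightarrow> real" where
  "ind x I = (if x \<in> I then 1 else 0)"

definition Tplus :: "pos set \<Rightarrow> pos \<Rightarrow> pos set \<Rightarrow> real" where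
  "Tplus P x I = (if x \<in> P - I \<and> (\<forall>y\<in>P - I. ple y x \<longrightarrow> y = x) then 1 else 0)"

definition Tminus :: "pos set \<Rightarrow> pos \<Rightarrow> pos set \<Rightarrow> real" where
  "Tminus P x I = (if x \<in> I \<and> (\<forall>y\<in>I. ple x y \<longrightarrow> y = x) then 1 else 0)"

definition toggle :: "pos set \<Rightarrow> pos \<Rightarrow> pos set \<Rightarrow> real" where
  "toggle P x I = Tplus P x I - Tminus P x I"

definition toggle_equiv :: "pos set \<Rightarrow> (pos set \<Rightarrow> real) \<Rightarrow> (pos set \<Rightarrow> real) \<Rightarrow> bool" where
  "toggle_equiv P f g \<longleftrightarrow>
     (\<exists>c :: pos \<Rightarrow> real. \<forall>I\<in>order_ideals P. f I - g I = (\<Sum>x\<in>P. c x * toggle P x I))"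

end

theory Submission
  imports Defs
begin

(* Every cover relation of PhiB n is a unit step of the grid, so the toggles at x = (i,j) only
   see the four neighbours of x: writing a, b for the indicators of (i+1,j), (i,j+1) and p for
   "neither (i-1,j) nor (i,j-1) lies in P - I", one gets T_x = p - 2 1_x + a + b - a b.
   Along the diagonal j - i = k the value of p at (i+1,j+1) is the product a b at (i,j), so the
   sum of the toggles over the diagonal telescopes to
   1 - 2 (diagonal k) + (diagonal k-1) + (diagonal k+1),
   the boundary term being 1 because for even k the lowest element of the diagonal has no lower
   neighbour in P and the highest one has no upper neighbour on the diagonal k+1.  On the main
   diagonal the neighbours (i+1,i) are missing, which is why the diagonal j - i = 1 enters twice. *)

lemma sum_atLeastAtMost_shift_diff:
  fixes p q :: "nat \<Rightarrow> 'a::ab_group_add"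
  assumes "m \<le> n" and "\<And>i. m \<le> i \<Longrightarrow> i < n \<Longrightarrow> p (Suc i) = q i"
  shows "(\<Sum>i=m..n. p i) - (\<Sum>i=m..n. q i) = p m - q n"
  using assms
proof (induction n rule: dec_induct)
  case base
  then show ?case by simp
next
  case (step n)
  then show ?case by (simp add: sum.cl_ivl_Suc algebra_simps)
qed

lemma order_ideals_subset: "I \<in> order_ideals P \<Longrightarrow> I \<subseteq> P"
  by (simp add: order_ideals_def)

lemma order_ideals_downward:
  "I \<in> order_ideals P \<Longrightarrow> x \<in> I \<Longrightarrow> y \<in> P \<Longrightarrow> ple y x \<Longrightarrow> y \<in> I"
  by (auto simp: order_ideals_def)

lemma ind_outside: "I \<subseteq> P \<Longrightarrow> x \<notin> P \<Longrightarrow> ind x I = 0"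
  by (auto simp: ind_def)

lemma ind_Diff: "x \<in> P \<Longrightarrow> ind x (P - I) = 1 - ind x I"
  by (simp add: ind_def)

lemma Tplus_eq_lower_neighbours:
  assumes I: "I \<in> order_ideals P" and pos: "0 < i" "0 < j"
    and step: "\<forall>y\<in>P. ple y (i,j) \<and> y \<noteq> (i,j) \<longrightarrow> (\<exists>z\<in>P \<inter> {(i-1,j), (i,j-1)}. ple y z)"
  shows "Tplus P (i,j) I
           = ind (i,j) (P - I) * (1 - ind (i-1,j) (P - I)) * (1 - ind (i,j-1) (P - I))"
proof -
  have "(\<forall>y\<in>P - I. ple y (i,j) \<longrightarrow> y = (i,j)) \<longleftrightarrow> (i-1,j) \<notin> P - I \<and> (i,j-1) \<notin> P - I"
  proof
    assume "\<forall>y\<in>P - I. ple y (i,j) \<longrightarrow> y = (i,j)"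
    moreover have "ple (i-1,j) (i,j)" "ple (i,j-1) (i,j)" "(i-1,j) \<noteq> (i,j)" "(i,j-1) \<noteq> (i,j)"
      using pos by (auto simp: ple_def)
    ultimately show "(i-1,j) \<notin> P - I \<and> (i,j-1) \<notin> P - I"
      by blast
  next
    assume nbrs: "(i-1,j) \<notin> P - I \<and> (i,j-1) \<notin> P - I"
    show "\<forall>y\<in>P - I. ple y (i,j) \<longrightarrow> y = (i,j)"
    proof (intro ballI impI, rule ccontr)
      fix y assume y: "y \<in> P - I" "ple y (i,j)" "y \<noteq> (i,j)"
      then obtain z where "z \<in> P" "z \<in> I" "ple y z"
        using step nbrs by blast
      then show False
        using y order_ideals_downward[OF I] by blast
    qed
  qed
  then show ?thesis
    by (simp add: Tplus_def ind_def)
qed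

lemma Tminus_eq_upper_neighbours:
  assumes I: "I \<in> order_ideals P"
    and step: "\<forall>y\<in>P. ple (i,j) y \<and> y \<noteq> (i,j) \<longrightarrow> (\<exists>z\<in>P \<inter> {(i+1,j), (i,j+1)}. ple z y)"
  shows "Tminus P (i,j) I = ind (i,j) I * (1 - ind (i+1,j) I) * (1 - ind (i,j+1) I)"
proof -
  have "(\<forall>y\<in>I. ple (i,j) y \<longrightarrow> y = (i,j)) \<longleftrightarrow> (i+1,j) \<notin> I \<and> (i,j+1) \<notin> I"
  proof
    assume "\<forall>y\<in>I. ple (i,j) y \<longrightarrow> y = (i,j)"
    then show "(i+1,j) \<notin> I \<and> (i,j+1) \<notin> I"
      by (auto simp: ple_def)
  next
    assume nbrs: "(i+1,j) \<notin> I \<and> (i,j+1) \<notin> I"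
    show "\<forall>y\<in>I. ple (i,j) y \<longrightarrow> y = (i,j)"
    proof (intro ballI impI, rule ccontr)
      fix y assume y: "y \<in> I" "ple (i,j) y" "y \<noteq> (i,j)"
      then obtain z where "z \<in> P" "z \<notin> I" "ple z y"
        using step nbrs order_ideals_subset[OF I] by blast
      then show False
        using y order_ideals_downward[OF I] by blast
    qed
  qed
  then show ?thesis
    by (simp add: Tminus_def ind_def)
qed

lemma toggle_equiv_if_sum_toggles:
  assumes "finite P" "S \<subseteq> P"
    and "\<And>I. I \<in> order_ideals P \<Longrightarrow> f I - g I = c * (\<Sum>x\<in>S. toggle P x I)"
  shows "toggle_equiv P f g"
  unfolding toggle_equiv_def
proof (intro exI ballI)
  fix I assume "I \<in> order_ideals P"
  have "(\<Sum>x\<in>P. (if x \<in> S then c else 0) * toggle P x I) = (\<Sum>x\<in>P \<inter> S. c * toggle P x I)"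
    unfolding sum.inter_restrict[OF assms(1)] by (intro sum.cong) auto
  also have "\<dots> = c * (\<Sum>x\<in>S. toggle P x I)"
    using assms(2) by (simp add: Int_absorb1 sum_distrib_left)
  finally show "f I - g I = (\<Sum>x\<in>P. (if x \<in> S then c else 0) * toggle P x I)"
    using assms(3)[OF \<open>I \<in> order_ideals P\<close>] by simp
qed

definition diagonal :: "pos set \<Rightarrow> nat \<Rightarrow> pos set" where
  "diagonal P d = {x\<in>P. snd x = fst x + d}"

lemma diagonal_subset: "diagonal P d \<subseteq> P"
  by (auto simp: diagonal_def)

lemma sum_diagonal: "(\<Sum>x\<in>diagonal P d. f x) = (\<Sum>i | (i, i+d) \<in> P. f (i, i+d))"
  unfolding diagonal_def
  by (rule sum.reindex_bij_witness[where i = "\<lambda>i. (i, i+d)" and j = fst]) auto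

lemma sum_diagonal_ind:
  assumes "I \<subseteq> P" "finite A" "{i. (i, i+d) \<in> P} \<subseteq> A"
  shows "(\<Sum>x\<in>diagonal P d. ind x I) = (\<Sum>i\<in>A. ind (i, i+d) I)"
  unfolding sum_diagonal
  using assms by (intro sum.mono_neutral_left) (auto intro: finite_subset ind_outside)

lemma finite_PhiB: "finite (PhiB n)"
  by (rule finite_subset[of _ "{0..2*n} \<times> {0..2*n}"]) (auto simp: PhiB_def)

lemma diagonal_PhiB: "{x\<in>PhiB n. snd x - fst x = d} = diagonal (PhiB n) d"
  by (auto simp: PhiB_def diagonal_def)

lemma PhiB_step_down:
  assumes "(i,j) \<in> PhiB n"
  shows "\<forall>y\<in>PhiB n. ple y (i,j) \<and> y \<noteq> (i,j) \<longrightarrow> (\<exists>z\<in>PhiB n \<inter> {(i-1,j), (i,j-1)}. ple y z)"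
proof (intro ballI impI)
  fix y assume y: "y \<in> PhiB n" "ple y (i,j) \<and> y \<noteq> (i,j)"
  show "\<exists>z\<in>PhiB n \<inter> {(i-1,j), (i,j-1)}. ple y z"
  proof (cases "fst y < i")
    case True
    then have "(i-1,j) \<in> PhiB n" "ple y (i-1,j)"
      using assms y by (auto simp: PhiB_def ple_def)
    then show ?thesis by blast
  next
    case False
    then have "(i,j-1) \<in> PhiB n" "ple y (i,j-1)"
      using assms y by (auto simp: PhiB_def ple_def)
    then show ?thesis by blast
  qed
qed

lemma PhiB_step_up:
  assumes "(i,j) \<in> PhiB n"
  shows "\<forall>y\<in>PhiB n. ple (i,j) y \<and> y \<noteq> (i,j) \<longrightarrow> (\<exists>z\<in>PhiB n \<inter> {(i+1,j), (i,j+1)}. ple z y)"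
proof (intro ballI impI)
  fix y assume y: "y \<in> PhiB n" "ple (i,j) y \<and> y \<noteq> (i,j)"
  show "\<exists>z\<in>PhiB n \<inter> {(i+1,j), (i,j+1)}. ple z y"
  proof (cases "j < snd y")
    case True
    then have "(i,j+1) \<in> PhiB n" "ple (i,j+1) y"
      using assms y by (auto simp: PhiB_def ple_def)
    then show ?thesis by blast
  next
    case False
    then have "(i+1,j) \<in> PhiB n" "ple (i+1,j) y"
      using assms y by (auto simp: PhiB_def ple_def)
    then show ?thesis by blast
  qed
qed

lemma toggle_PhiB_eq:
  assumes I: "I \<in> order_ideals (PhiB n)" and x: "(i,j) \<in> PhiB n"
  shows "toggle (PhiB n) (i,j) I
           = (1 - ind (i-1,j) (PhiB n - I)) * (1 - ind (i,j-1) (PhiB n - I))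
             - 2 * ind (i,j) I + ind (i+1,j) I + ind (i,j+1) I - ind (i+1,j) I * ind (i,j+1) I"
proof -
  have pos: "0 < i" "0 < j"
    using x by (auto simp: PhiB_def)
  note Tplus_eq = Tplus_eq_lower_neighbours[OF I pos PhiB_step_down[OF x]]
  note Tminus_eq = Tminus_eq_upper_neighbours[OF I PhiB_step_up[OF x]]
  show ?thesis
  proof (cases "(i,j) \<in> I")
    case True
    then have "(i-1,j) \<notin> PhiB n - I" "(i,j-1) \<notin> PhiB n - I"
      using order_ideals_downward[OF I True] by (auto simp: ple_def)
    with True show ?thesis
      unfolding toggle_def Tplus_eq Tminus_eq by (simp add: ind_def algebra_simps)
  next
    case False
    then have "(i+1,j) \<notin> I" "(i,j+1) \<notin> I"
      using order_ideals_downward[OF I _ x, of "(i+1,j)"] order_ideals_downward[OF I _ x, of "(i,j+1)"]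
      by (auto simp: ple_def)
    with False x show ?thesis
      unfolding toggle_def Tplus_eq Tminus_eq by (simp add: ind_def)
  qed
qed

lemma sum_toggle_PhiB_even_diagonal:
  assumes I: "I \<in> order_ideals (PhiB n)" and m: "1 \<le> m" "m < n"
  shows "(\<Sum>x\<in>diagonal (PhiB n) (2*m). toggle (PhiB n) x I)
           = 1 - 2 * (\<Sum>x\<in>diagonal (PhiB n) (2*m). ind x I)
               + (\<Sum>x\<in>diagonal (PhiB n) (2*m - 1). ind x I)
               + (\<Sum>x\<in>diagonal (PhiB n) (2*m + 1). ind x I)"
proof -
  let ?P = "PhiB n"
  define L H where "L = n - m" and "H = 2*n - 1 - 2*m"
  define p where "p i = (1 - ind (i-1, i+2*m) (?P - I)) * (1 - ind (i, i+2*m-1) (?P - I))" for i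
  define u where "u i = ind (i, i+2*m) I" for i
  define a where "a i = ind (i+1, i+2*m) I" for i
  define b where "b i = ind (i, i + (2*m+1)) I" for i
  have IP: "I \<subseteq> ?P"
    using I by (rule order_ideals_subset)
  have range: "{i. (i, i+2*m) \<in> ?P} = {L..H}"
    using m by (auto simp: PhiB_def L_def H_def)
  have "(\<Sum>x\<in>diagonal ?P (2*m). toggle ?P x I) = (\<Sum>i=L..H. p i - 2 * u i + a i + b i - a i * b i)"
    unfolding sum_diagonal range
  proof (intro sum.cong refl)
    fix i assume "i \<in> {L..H}"
    then have "(i, i+2*m) \<in> ?P"
      using range by blast
    then show "toggle ?P (i, i+2*m) I = p i - 2 * u i + a i + b i - a i * b i"
      by (simp add: toggle_PhiB_eq[OF I] p_def u_def a_def b_def)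
  qed
  also have "\<dots> = ((\<Sum>i=L..H. p i) - (\<Sum>i=L..H. a i * b i)) - 2 * (\<Sum>i=L..H. u i)
                   + (\<Sum>i=L..H. a i) + (\<Sum>i=L..H. b i)"
    by (simp add: sum.distrib sum_subtractf sum_distrib_left)
  also have "(\<Sum>i=L..H. p i) - (\<Sum>i=L..H. a i * b i) = p L - a H * b H"
  proof (rule sum_atLeastAtMost_shift_diff)
    show "L \<le> H"
      using m by (simp add: L_def H_def)
    fix i assume "L \<le> i" "i < H"
    then have "(i, Suc i + 2*m) \<in> ?P" "(Suc i, Suc i + 2*m - 1) \<in> ?P"
      using m by (auto simp: PhiB_def L_def H_def)
    then show "p (Suc i) = a i * b i"
      by (simp add: p_def a_def b_def ind_Diff mult.commute)
  qed
  also have "p L - a H * b H = 1"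
  proof -
    \<comment> \<open>This is where evenness enters: on an odd diagonal the lowest element has a lower neighbour in P.\<close>
    have "(L-1, L+2*m) \<notin> ?P" "(L, L+2*m-1) \<notin> ?P"
      using m by (auto simp: PhiB_def L_def H_def)
    then have "p L = 1"
      by (simp add: p_def ind_def)
    have "(H, H+2*m+1) \<notin> ?P"
      using m by (auto simp: PhiB_def H_def)
    then have "b H = 0"
      using IP by (simp add: b_def ind_outside)
    show ?thesis
      using \<open>p L = 1\<close> \<open>b H = 0\<close> by simp
  qed
  also have "(\<Sum>i=L..H. u i) = (\<Sum>x\<in>diagonal ?P (2*m). ind x I)"
    unfolding u_def by (rule sum_diagonal_ind[symmetric]) (use IP range in auto)
  also have "(\<Sum>i=L..H. a i) = (\<Sum>x\<in>diagonal ?P (2*m - 1). ind x I)"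
  proof -
    have "(\<Sum>x\<in>diagonal ?P (2*m - 1). ind x I) = (\<Sum>i=Suc L..Suc H. ind (i, i + (2*m - 1)) I)"
      using IP m by (intro sum_diagonal_ind) (auto simp: PhiB_def L_def H_def)
    also have "\<dots> = (\<Sum>i=L..H. a i)"
      unfolding sum.shift_bounds_cl_Suc_ivl a_def using m by simp
    finally show ?thesis ..
  qed
  also have "(\<Sum>i=L..H. b i) = (\<Sum>x\<in>diagonal ?P (2*m + 1). ind x I)"
    unfolding b_def using IP m
    by (intro sum_diagonal_ind[symmetric]) (auto simp: PhiB_def L_def H_def)
  finally show ?thesis
    by simp
qed

lemma sum_toggle_PhiB_main_diagonal:
  assumes I: "I \<in> order_ideals (PhiB n)" and n: "1 \<le> n"
  shows "(\<Sum>x\<in>diagonal (PhiB n) 0. toggle (PhiB n) x I)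
           = 1 - 2 * (\<Sum>x\<in>diagonal (PhiB n) 0. ind x I) + 2 * (\<Sum>x\<in>diagonal (PhiB n) 1. ind x I)"
proof -
  let ?P = "PhiB n"
  define p where "p i = 1 - ind (i-1, i) (?P - I)" for i
  define u where "u i = ind (i, i) I" for i
  define b where "b i = ind (i, i+1) I" for i
  have IP: "I \<subseteq> ?P"
    using I by (rule order_ideals_subset)
  have range: "{i. (i, i+0) \<in> ?P} = {n..2*n-1}"
    using n by (auto simp: PhiB_def)
  have "(\<Sum>x\<in>diagonal ?P 0. toggle ?P x I) = (\<Sum>i=n..2*n-1. p i - 2 * u i + b i)"
    unfolding sum_diagonal range
  proof (intro sum.cong refl)
    fix i assume "i \<in> {n..2*n-1}"
    then have "(i, i) \<in> ?P" "(i, i-1) \<notin> ?P" "(i+1, i) \<notin> ?P"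
      using n by (auto simp: PhiB_def)
    then show "toggle ?P (i, i+0) I = p i - 2 * u i + b i"
      using IP by (simp add: toggle_PhiB_eq[OF I] p_def u_def b_def ind_outside ind_def[of _ "?P - I"])
  qed
  also have "\<dots> = ((\<Sum>i=n..2*n-1. p i) - (\<Sum>i=n..2*n-1. b i)) - 2 * (\<Sum>i=n..2*n-1. u i)
                   + 2 * (\<Sum>i=n..2*n-1. b i)"
    by (simp add: sum.distrib sum_subtractf sum_distrib_left)
  also have "(\<Sum>i=n..2*n-1. p i) - (\<Sum>i=n..2*n-1. b i) = p n - b (2*n-1)"
  proof (rule sum_atLeastAtMost_shift_diff)
    show "n \<le> 2*n-1"
      using n by simp
    fix i assume "n \<le> i" "i < 2*n-1"
    then have "(i, Suc i) \<in> ?P"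
      by (auto simp: PhiB_def)
    then show "p (Suc i) = b i"
      by (simp add: p_def b_def ind_Diff)
  qed
  also have "p n - b (2*n-1) = 1"
  proof -
    have "(n-1, n) \<notin> ?P" "(2*n-1, 2*n-1+1) \<notin> ?P"
      using n by (auto simp: PhiB_def)
    then show ?thesis
      using IP by (simp add: p_def b_def ind_outside ind_def[of _ "?P - I"])
  qed
  also have "(\<Sum>i=n..2*n-1. u i) = (\<Sum>x\<in>diagonal ?P 0. ind x I)"
    unfolding u_def using IP range by (subst sum_diagonal_ind[where A = "{n..2*n-1}"]) auto
  also have "(\<Sum>i=n..2*n-1. b i) = (\<Sum>x\<in>diagonal ?P 1. ind x I)"
    unfolding b_def using IP n by (intro sum_diagonal_ind[symmetric]) (auto simp: PhiB_def)
  finally show ?thesis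
    by simp
qed

lemma toggle_equiv_PhiB_even_diagonal:
  assumes "1 \<le> m" "m < n"
  shows "toggle_equiv (PhiB n)
           (\<lambda>I. 2 * (\<Sum>x\<in>diagonal (PhiB n) (2*m). ind x I)
                - (\<Sum>x\<in>diagonal (PhiB n) (2*m - 1). ind x I)
                - (\<Sum>x\<in>diagonal (PhiB n) (2*m + 1). ind x I))
           (\<lambda>I. 1)"
  by (rule toggle_equiv_if_sum_toggles[OF finite_PhiB diagonal_subset[of _ "2*m"], where c = "-1"])
    (simp add: sum_toggle_PhiB_even_diagonal[OF _ assms])

lemma toggle_equiv_PhiB_main_diagonal:
  assumes "1 \<le> n"
  shows "toggle_equiv (PhiB n)
           (\<lambda>I. 2 * (\<Sum>x\<in>diagonal (PhiB n) 0. ind x I) - 2 * (\<Sum>x\<in>diagonal (PhiB n) 1. ind x I))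
           (\<lambda>I. 1)"
  by (rule toggle_equiv_if_sum_toggles[OF finite_PhiB diagonal_subset[of _ 0], where c = "-1"])
    (simp add: sum_toggle_PhiB_main_diagonal[OF _ assms])

theorem theorem3p37:
  fixes n :: nat
  assumes "n \<ge> 1"
  shows "(\<forall>k. even k \<and> 2 \<le> k \<and> k \<le> 2*n - 2 \<longrightarrow>
           toggle_equiv (PhiB n)
             (\<lambda>I. 2 * (\<Sum>x\<in>{x\<in>PhiB n. snd x - fst x = k}. ind x I)
                  - (\<Sum>x\<in>{x\<in>PhiB n. snd x - fst x = k - 1}. ind x I)
                  - (\<Sum>x\<in>{x\<in>PhiB n. snd x - fst x = k + 1}. ind x I))
             (\<lambda>I. 1))
       \<and> toggle_equiv (PhiB n)
           (\<lambda>I. 2 * (\<Sum>x\<in>{x\<in>PhiB n. snd x = fst x}. ind x I)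
                - 2 * (\<Sum>x\<in>{x\<in>PhiB n. snd x = fst x + 1}. ind x I))
           (\<lambda>I. 1)"
proof -
  have diagonals: "{x\<in>PhiB n. snd x = fst x} = diagonal (PhiB n) 0"
    "{x\<in>PhiB n. snd x = fst x + 1} = diagonal (PhiB n) 1"
    by (simp_all add: diagonal_def)
  show ?thesis
    unfolding diagonal_PhiB diagonals
    using toggle_equiv_PhiB_even_diagonal toggle_equiv_PhiB_main_diagonal[OF assms]
    by (auto elim!: evenE)
qed

end
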